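(* Let $\theta>0$, $N\ge1$, $g(u)=(u-\theta)_+$, and let $\delta>\theta$. Set $T_\varepsilon=\ln\frac{\delta-\theta}{\varepsilon}$. Then for every $\gamma\in(0,1)$ there exists $\varepsilon_0>0$ such that for every $\varepsilon\in(0,\varepsilon_0)$ and every $L\in(0,\gamma\ln\frac1\varepsilon)$, the solution $w$ of $w_t=\Delta w+g(w)$ on $(0,\infty)\times\mathbb R^N$ with $w(0,x)=(\theta+\varepsilon)\mathbf 1_{B_L}(x)$ satisfies $\sup_{x\in\mathbb R^N}w(T_\varepsilon,x)\le\theta$; consequently $w(t,\cdot)\to0$ uniformly as $t\to\infty$.
   Context: $(s)_+$ denotes the positive part of $s$; $B_L$ is the open ball of radius $L$ centred at $0$ in $\mathbb R^N$. *)

theory Defs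
  imports "HOL-Analysis.Analysis"
begin

definition heat_kernel :: "real \<Rightarrow> real^'n \<Rightarrow> real" where
  "heat_kernel t z = (4 * pi * t) powr (- real CARD('n) / 2) * exp (- (norm z)\<^sup>2 / (4 * t))"

definition pos_part :: "real \<Rightarrow> real" where
  "pos_part s = max s 0"

text \<open>Mild (Duhamel) solution of w_t = Laplacian w + g(w) on (0,\<infinity>) x R^N with initial datum w0,
  in the standard uniqueness class of functions bounded on every strip (0,T] x R^N.\<close>
definition mild_solution ::
  "(real \<Rightarrow> real) \<Rightarrow> (real^'n \<Rightarrow> real) \<Rightarrow> (real \<Rightarrow> real^'n \<Rightarrow> real) \<Rightarrow> bool" where
  "mild_solution g w0 w \<longleftrightarrow>
     (\<forall>T>0. \<exists>M. \<forall>t\<in>{0<..T}. \<forall>x. \<bar>w t x\<bar> \<le> M) \<and>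
     (\<forall>t>0. \<forall>x.
        integrable lborel (\<lambda>y. heat_kernel t (x - y) * w0 y) \<and>
        (\<forall>s\<in>{0<..<t}. integrable lborel (\<lambda>y. heat_kernel (t - s) (x - y) * g (w s y))) \<and>
        set_integrable lborel {0<..<t}
          (\<lambda>s. \<integral>y. heat_kernel (t - s) (x - y) * g (w s y) \<partial>lborel) \<and>
        w t x = (\<integral>y. heat_kernel t (x - y) * w0 y \<partial>lborel)
              + (\<integral>s\<in>{0<..<t}. (\<integral>y. heat_kernel (t - s) (x - y) * g (w s y) \<partial>lborel) \<partial>lborel))"

end

(* Duhamel's formula writes w as the heat flow of w0 plus the heat flow of the reaction (w - theta)_+.
   Since e^{t Delta} w0 <= theta + eps, a Picard-type bootstrap (error terms M t^k / k!, k -> infinity)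
   gives w <= e^{t Delta} w0 + eps (e^t - 1), so the reaction never exceeds eps e^t. Up to
   t1 = (gamma/2) ln(1/eps), Chebyshev's inequality for a Gaussian marginal then keeps w <= theta outside
   the slab |x . b| < L + ln(1/eps), so the reaction accumulated during (0, t1) is at most eps e^{t1}, and
   at most eps e^{t1} times the slab width over sqrt(4 pi (t - t1)) at times t > t1. As L < gamma ln(1/eps),
   for moderate t the heat flow removes from the slab a Gaussian mass of order
   eps^(gamma/2) / poly(ln(1/eps)), which beats eps e^{t1} = eps^(1 - gamma/2); for large t the heat part
   decays like L / sqrt t. So heat part plus early reaction stay <= theta for all t >= t1, and a second
   bootstrap gives w <= theta from t1 on: the reaction is switched off and w decays like the heat flow.
   Finally T_eps = ln(1/eps) + ln(delta - theta) >= t1 for small eps. *)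

theory Submission
  imports Defs "HOL-Probability.Probability" "HOL-Real_Asymp.Real_Asymp"
begin

section \<open>The heat kernel as a product of Gaussian densities\<close>

lemma heat_kernel_nonneg: "0 \<le> heat_kernel t z"
  unfolding heat_kernel_def by simp

lemma borel_measurable_heat_kernel[measurable]: "heat_kernel t \<in> borel_measurable borel"
  unfolding heat_kernel_def[abs_def] by measurable

lemma heat_kernel_eq_prod_normal_density:
  fixes x y :: "real^'n"
  assumes t: "t > 0"
  shows "heat_kernel t (x - y) = (\<Prod>b\<in>Basis. normal_density (x \<bullet> b) (sqrt (2 * t)) (y \<bullet> b))"
proof -
  have density: "normal_density (x \<bullet> b) (sqrt (2 * t)) (y \<bullet> b)
      = 1 / sqrt (4 * pi * t) * exp (- ((x - y) \<bullet> b)\<^sup>2 / (4 * t))" for b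
    using t by (simp add: normal_density_def inner_diff_left power2_commute)
  have "(\<Prod>b\<in>Basis. normal_density (x \<bullet> b) (sqrt (2 * t)) (y \<bullet> b))
      = (1 / sqrt (4 * pi * t)) ^ CARD('n) * exp (\<Sum>b\<in>Basis. - ((x - y) \<bullet> b)\<^sup>2 / (4 * t))"
    unfolding density prod.distrib by (simp add: exp_sum)
  also have "(1 / sqrt (4 * pi * t)) ^ CARD('n) = (4 * pi * t) powr (- real CARD('n) / 2)"
  proof -
    have "1 / sqrt (4 * pi * t) = (4 * pi * t) powr (-1/2)"
      using t by (simp add: powr_minus_divide powr_half_sqrt)
    moreover have "((4 * pi * t) powr (-1/2)) ^ CARD('n) = (4 * pi * t) powr (- real CARD('n) / 2)"
      using t by (simp add: powr_realpow[symmetric] powr_powr)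
    ultimately show ?thesis
      by (simp only:)
  qed
  also have "(\<Sum>b\<in>Basis. - ((x - y) \<bullet> b)\<^sup>2 / (4 * t)) = - (norm (x - y))\<^sup>2 / (4 * t)"
  proof -
    have "(norm (x - y))\<^sup>2 = (\<Sum>b\<in>Basis. ((x - y) \<bullet> b) * ((x - y) \<bullet> b))"
      unfolding power2_norm_eq_inner by (rule euclidean_inner)
    then show ?thesis
      by (simp add: power2_eq_square sum_divide_distrib[symmetric] sum_negf)
  qed
  finally show ?thesis
    unfolding heat_kernel_def by simp
qed

lemma nn_integral_normal_density:
  assumes "\<sigma> > 0"
  shows "(\<integral>\<^sup>+v. ennreal (normal_density \<mu> \<sigma> v) \<partial>lborel) = 1"
proof -
  have "(\<integral>\<^sup>+v. ennreal (normal_density \<mu> \<sigma> v) \<partial>lborel)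
      = ennreal (\<integral>v. normal_density \<mu> \<sigma> v \<partial>lborel)"
    using assms by (intro nn_integral_eq_integral) auto
  with assms show ?thesis by simp
qed

lemma nn_integral_heat_kernel_coordinate:
  fixes x :: "real^'n" and f :: "real \<Rightarrow> real"
  assumes t: "t > 0" and b: "b \<in> Basis" and [measurable]: "f \<in> borel_measurable borel"
    and f_nonneg: "\<And>u. 0 \<le> f u"
  shows "(\<integral>\<^sup>+y. ennreal (heat_kernel t (x - y) * f (y \<bullet> b)) \<partial>lborel)
       = (\<integral>\<^sup>+u. ennreal (normal_density (x \<bullet> b) (sqrt (2 * t)) u * f u) \<partial>lborel)"
proof -
  define F where
    "F c v = ennreal (normal_density (x \<bullet> c) (sqrt (2 * t)) v * (if c = b then f v else 1))" for c v
  have "(\<Prod>c\<in>Basis. normal_density (x \<bullet> c) (sqrt (2 * t)) (y \<bullet> c) * (if c = b then f (y \<bullet> c) else 1))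
      = heat_kernel t (x - y) * f (y \<bullet> b)" for y
    using b by (simp add: prod.distrib prod.delta' heat_kernel_eq_prod_normal_density[OF t])
  then have integrand: "ennreal (heat_kernel t (x - y) * f (y \<bullet> b)) = (\<Prod>c\<in>Basis. F c (y \<bullet> c))" for y
    unfolding F_def using f_nonneg by (subst prod_ennreal) auto
  have "(\<integral>\<^sup>+y. ennreal (heat_kernel t (x - y) * f (y \<bullet> b)) \<partial>lborel)
      = (\<Prod>c\<in>Basis. \<integral>\<^sup>+v. F c v \<partial>lborel)"
    unfolding integrand by (rule nn_integral_lborel_prod) (auto simp: F_def)
  also have "\<dots> = (\<integral>\<^sup>+v. F b v \<partial>lborel) * (\<Prod>c\<in>Basis - {b}. \<integral>\<^sup>+v. F c v \<partial>lborel)"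
    using b by (simp add: prod.remove)
  also have "(\<Prod>c\<in>Basis - {b}. \<integral>\<^sup>+v. F c v \<partial>lborel) = 1"
    using t by (intro prod.neutral) (auto simp: F_def nn_integral_normal_density)
  finally show ?thesis by (simp add: F_def)
qed

lemma integrable_normal_density_mult_bounded:
  fixes f :: "real \<Rightarrow> real"
  assumes "\<sigma> > 0" and [measurable]: "f \<in> borel_measurable borel"
    and f: "\<And>u. 0 \<le> f u" "\<And>u. f u \<le> C"
  shows "integrable lborel (\<lambda>u. normal_density \<mu> \<sigma> u * f u)"
proof (rule Bochner_Integration.integrable_bound[where f="\<lambda>u. C * normal_density \<mu> \<sigma> u"])
  show "AE u in lborel. norm (normal_density \<mu> \<sigma> u * f u) \<le> norm (C * normal_density \<mu> \<sigma> u)"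
  proof (intro AE_I2)
    fix u
    have "normal_density \<mu> \<sigma> u * f u \<le> normal_density \<mu> \<sigma> u * \<bar>C\<bar>"
      using f(2)[of u] by (intro mult_left_mono) auto
    then show "norm (normal_density \<mu> \<sigma> u * f u) \<le> norm (C * normal_density \<mu> \<sigma> u)"
      using f(1)[of u] by (simp add: abs_mult mult.commute)
  qed
qed (use assms in auto)

lemma
  fixes x :: "real^'n" and f :: "real \<Rightarrow> real"
  assumes t: "t > 0" and b: "b \<in> Basis" and f_meas[measurable]: "f \<in> borel_measurable borel"
    and f: "\<And>u. 0 \<le> f u" "\<And>u. f u \<le> C"
  shows integrable_heat_kernel_coordinate: "integrable lborel (\<lambda>y. heat_kernel t (x - y) * f (y \<bullet> b))"
    and integral_heat_kernel_coordinate: "(\<integral>y. heat_kernel t (x - y) * f (y \<bullet> b) \<partial>lborel)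
       = (\<integral>u. normal_density (x \<bullet> b) (sqrt (2 * t)) u * f u \<partial>lborel)"
proof -
  have integrable_1d: "integrable lborel (\<lambda>u. normal_density (x \<bullet> b) (sqrt (2 * t)) u * f u)"
    by (rule integrable_normal_density_mult_bounded) (use f t in auto)
  have nonneg: "AE y in lborel. 0 \<le> heat_kernel t (x - y) * f (y \<bullet> b)"
    using f by (simp add: heat_kernel_nonneg)
  note marginal = nn_integral_heat_kernel_coordinate[OF t b f_meas f(1)]
  have "(\<integral>\<^sup>+u. ennreal (normal_density (x \<bullet> b) (sqrt (2 * t)) u * f u) \<partial>lborel) < \<infinity>"
    using integrable_1d by (simp add: integrable_iff_bounded f)
  then show "integrable lborel (\<lambda>y. heat_kernel t (x - y) * f (y \<bullet> b))"
    by (intro integrableI_nonneg[OF _ nonneg]) (auto simp: marginal infinity_ennreal_def)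
  show "(\<integral>y. heat_kernel t (x - y) * f (y \<bullet> b) \<partial>lborel)
       = (\<integral>u. normal_density (x \<bullet> b) (sqrt (2 * t)) u * f u \<partial>lborel)"
    by (subst integral_eq_nn_integral[OF _ nonneg], simp, subst integral_eq_nn_integral)
       (auto simp: marginal f)
qed

lemma
  fixes x :: "real^'n"
  assumes "t > 0"
  shows integrable_heat_kernel: "integrable lborel (\<lambda>y. heat_kernel t (x - y))"
    and integral_heat_kernel: "(\<integral>y. heat_kernel t (x - y) \<partial>lborel) = 1"
  using integrable_heat_kernel_coordinate[OF assms SOME_Basis, of "\<lambda>_. 1" 1 x]
    integral_heat_kernel_coordinate[OF assms SOME_Basis, of "\<lambda>_. 1" 1 x] assms
  by simp_all

lemma heat_integral_le_const:
  fixes x :: "real^'n"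
  assumes t: "t > 0" and integrable: "integrable lborel (\<lambda>y. heat_kernel t (x - y) * h y)"
    and h: "\<And>y. h y \<le> c"
  shows "(\<integral>y. heat_kernel t (x - y) * h y \<partial>lborel) \<le> c"
proof -
  have "(\<integral>y. heat_kernel t (x - y) * h y \<partial>lborel) \<le> (\<integral>y. heat_kernel t (x - y) * c \<partial>lborel)"
    using integrable_heat_kernel[OF t, of x]
    by (intro integral_mono[OF integrable]) (auto intro!: mult_left_mono h heat_kernel_nonneg)
  also have "\<dots> = c"
    using integral_heat_kernel[OF t, of x] by simp
  finally show ?thesis .
qed

lemma heat_integral_le_coordinate:
  fixes x :: "real^'n" and f :: "real \<Rightarrow> real"
  assumes t: "t > 0" and b: "b \<in> Basis" and [measurable]: "f \<in> borel_measurable borel"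
    and f: "\<And>u. 0 \<le> f u" "\<And>u. f u \<le> C" and c: "c \<ge> 0"
    and integrable: "integrable lborel (\<lambda>y. heat_kernel t (x - y) * h y)"
    and h: "\<And>y. h y \<le> c * f (y \<bullet> b)"
  shows "(\<integral>y. heat_kernel t (x - y) * h y \<partial>lborel)
      \<le> c * (\<integral>u. normal_density (x \<bullet> b) (sqrt (2 * t)) u * f u \<partial>lborel)"
proof -
  have cf: "0 \<le> c * f u" "c * f u \<le> c * C" for u
    using f c by (auto intro: mult_left_mono)
  have "(\<integral>y. heat_kernel t (x - y) * h y \<partial>lborel)
      \<le> (\<integral>y. heat_kernel t (x - y) * (c * f (y \<bullet> b)) \<partial>lborel)"
    by (intro integral_mono[OF integrable] integrable_heat_kernel_coordinate[OF t b _ cf])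
       (auto intro!: mult_left_mono h heat_kernel_nonneg)
  also have "\<dots> = (\<integral>u. normal_density (x \<bullet> b) (sqrt (2 * t)) u * (c * f u) \<partial>lborel)"
    by (intro integral_heat_kernel_coordinate[OF t b _ cf]) simp
  also have "\<dots> = c * (\<integral>u. normal_density (x \<bullet> b) (sqrt (2 * t)) u * f u \<partial>lborel)"
    by (simp add: mult.left_commute)
  finally show ?thesis .
qed

section \<open>Gaussian mass of an interval\<close>

lemma normal_density_le: "\<sigma> > 0 \<Longrightarrow> normal_density \<mu> \<sigma> u \<le> 1 / sqrt (2 * pi * \<sigma>\<^sup>2)"
  unfolding normal_density_def by (simp add: divide_le_eq)

lemma integrable_normal_density_mult_indicator:
  "\<sigma> > 0 \<Longrightarrow> integrable lborel (\<lambda>u. normal_density \<mu> \<sigma> u * indicator {a<..<b} u)"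
  by (rule integrable_normal_density_mult_bounded[where C = 1]) (auto split: split_indicator)

lemma integral_normal_density_interval_le_width:
  assumes \<sigma>: "\<sigma> > 0" and "a \<le> b"
  shows "(\<integral>u. normal_density \<mu> \<sigma> u * indicator {a<..<b} u \<partial>lborel) \<le> (b - a) / sqrt (2 * pi * \<sigma>\<^sup>2)"
proof -
  have "(\<integral>u. normal_density \<mu> \<sigma> u * indicator {a<..<b} u \<partial>lborel)
      \<le> (\<integral>u. 1 / sqrt (2 * pi * \<sigma>\<^sup>2) * indicator {a<..<b} u \<partial>lborel)"
    using assms normal_density_le[OF \<sigma>]
    by (intro integral_mono integrable_normal_density_mult_indicator integrable_mult_right
        integrable_real_indicator) (auto split: split_indicator)
  also have "\<dots> = (b - a) / sqrt (2 * pi * \<sigma>\<^sup>2)"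
    using assms by simp
  finally show ?thesis .
qed

lemma integral_normal_density_interval_le_one_minus:
  assumes \<sigma>: "\<sigma> > 0" and L: "L \<ge> 0"
  shows "(\<integral>u. normal_density \<mu> \<sigma> u * indicator {-L<..<L} u \<partial>lborel) \<le> 1 - normal_density 0 \<sigma> (L + 1)"
proof -
  \<comment> \<open>a unit interval outside \<open>{-L<..<L}\<close> within distance \<open>L + 1\<close> of \<open>\<mu>\<close>\<close>
  define J where "J = (if \<mu> \<ge> 0 then {\<mu> + L..\<mu> + L + 1} else {\<mu> - L - 1..\<mu> - L})"
  have J_disjoint: "u \<in> J \<Longrightarrow> u \<notin> {-L<..<L}" for u
    using L by (auto simp: J_def split: if_splits)
  have J_density: "normal_density 0 \<sigma> (L + 1) \<le> normal_density \<mu> \<sigma> u" if "u \<in> J" for u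
  proof -
    have "\<bar>u - \<mu>\<bar> \<le> L + 1"
      using that L by (auto simp: J_def split: if_splits)
    then have "(u - \<mu>)\<^sup>2 \<le> (L + 1)\<^sup>2"
      by (metis abs_le_square_iff abs_of_nonneg add_nonneg_nonneg L zero_le_one)
    then show ?thesis
      using \<sigma> unfolding normal_density_def by (auto intro!: mult_left_mono divide_right_mono)
  qed
  have integrable_J: "integrable lborel (\<lambda>u. normal_density 0 \<sigma> (L + 1) * indicator J u)"
    by (intro integrable_mult_right integrable_real_indicator) (auto simp: J_def)
  have "(\<integral>u. normal_density \<mu> \<sigma> u * indicator {-L<..<L} u \<partial>lborel) + normal_density 0 \<sigma> (L + 1)
      = (\<integral>u. normal_density \<mu> \<sigma> u * indicator {-L<..<L} u
              + normal_density 0 \<sigma> (L + 1) * indicator J u \<partial>lborel)"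
    using integrable_normal_density_mult_indicator[OF \<sigma>] integrable_J
    by (simp add: Bochner_Integration.integral_add J_def)
  also have "\<dots> \<le> (\<integral>u. normal_density \<mu> \<sigma> u \<partial>lborel)"
    using integrable_normal_density_mult_indicator[OF \<sigma>] integrable_J \<sigma> J_disjoint J_density
    by (intro integral_mono Bochner_Integration.integrable_add) (auto split: split_indicator)
  also have "\<dots> = 1"
    using \<sigma> by simp
  finally show ?thesis
    by simp
qed

lemma integral_normal_density_interval_le_Chebyshev:
  assumes \<sigma>: "\<sigma> > 0" and R: "R > 0" and far: "\<bar>\<mu>\<bar> \<ge> L + R"
  shows "(\<integral>u. normal_density \<mu> \<sigma> u * indicator {-L<..<L} u \<partial>lborel) \<le> \<sigma>\<^sup>2 / R\<^sup>2"
proof -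
  have square_ge: "1 \<le> (u - \<mu>)\<^sup>2 / R\<^sup>2" if "u \<in> {-L<..<L}" for u
  proof -
    have "R \<le> \<bar>u - \<mu>\<bar>"
      using that far by auto
    then have "R\<^sup>2 \<le> (u - \<mu>)\<^sup>2"
      using R by (simp add: abs_le_square_iff[symmetric])
    then show ?thesis
      using R by simp
  qed
  have "(\<integral>u. normal_density \<mu> \<sigma> u * indicator {-L<..<L} u \<partial>lborel)
      \<le> (\<integral>u. normal_density \<mu> \<sigma> u * (u - \<mu>) ^ (2 * 1) / R\<^sup>2 \<partial>lborel)"
  proof (rule integral_mono)
    show "integrable lborel (\<lambda>u. normal_density \<mu> \<sigma> u * (u - \<mu>) ^ (2 * 1) / R\<^sup>2)"
      using integrable_normal_moment[of \<sigma> \<mu> "2 * 1"] \<sigma> by simp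
    show "normal_density \<mu> \<sigma> u * indicator {-L<..<L} u \<le> normal_density \<mu> \<sigma> u * (u - \<mu>) ^ (2 * 1) / R\<^sup>2"
      for u
      using mult_left_mono[OF square_ge, of u "normal_density \<mu> \<sigma> u"]
      by (cases "u \<in> {-L<..<L}") auto
  qed (use integrable_normal_density_mult_indicator[OF \<sigma>] in simp)
  also have "\<dots> = \<sigma>\<^sup>2 / R\<^sup>2"
    using integral_normal_moment_even[of \<sigma> \<mu> 1] \<sigma> by simp
  finally show ?thesis .
qed

section \<open>Comparison estimates for the mild solution\<close>

lemma set_integral_le_antiderivative:
  fixes F B P :: "real \<Rightarrow> real"
  assumes "a \<le> b" and S: "{a<..<b} \<subseteq> S" "S \<subseteq> {a..b}" "S \<in> sets borel"
    and F: "set_integrable lborel S F" "\<And>s. s \<in> S \<Longrightarrow> F s \<le> B s"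
    and B: "continuous_on {a..b} B"
    and P: "\<And>s. a \<le> s \<Longrightarrow> s \<le> b \<Longrightarrow> (P has_real_derivative B s) (at s)"
  shows "(LINT s:S|lborel. F s) \<le> P b - P a"
proof -
  have B_integrable: "set_integrable lborel S B"
    by (rule set_integrable_subset[OF borel_integrable_atLeastAtMost'[OF B]]) (use S in auto)
  have "(LINT s:S|lborel. F s) \<le> (LINT s:S|lborel. B s)"
    by (rule set_integral_mono[OF F(1) B_integrable F(2)])
  also have "\<dots> = (LINT s:{a..b}|lborel. B s)"
    by (rule set_integral_discrete_difference[where X = "{a, b}"]) (use S in force)+
  also have "\<dots> = P b - P a"
    using assms by (simp add: interval_integral_Icc[symmetric]) (intro interval_integral_FTC_finite,
      auto simp: has_real_derivative_iff_has_vector_derivative intro: has_vector_derivative_at_within)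
  finally show ?thesis .
qed

lemma le_of_le_plus_power_div_fact:
  fixes a b M t :: real
  assumes "\<And>k. a \<le> b + M * t ^ k / fact k"
  shows "a \<le> b"
proof -
  have "(\<lambda>k. t ^ k / fact k) \<longlonglongrightarrow> 0"
    using summable_exp[of t] by (intro summable_LIMSEQ_zero) (simp add: inverse_eq_divide)
  then have "(\<lambda>k. b + M * (t ^ k / fact k)) \<longlonglongrightarrow> b + M * 0"
    by (intro tendsto_intros)
  then show ?thesis
    using assms by (intro tendsto_lowerbound[where F = sequentially]) (auto simp: mult.assoc)
qed

lemma has_real_derivative_power_div_fact:
  "((\<lambda>s. M * (s - a) ^ Suc k / fact (Suc k)) has_real_derivative M * (x - a) ^ k / fact k) (at x)"
proof -
  have "((\<lambda>s. (s - a) ^ Suc k) has_real_derivative real (Suc k) * (x - a) ^ k) (at x)"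
    by (auto intro!: derivative_eq_intros) (cases k; simp add: algebra_simps)
  then have "((\<lambda>s. M * (s - a) ^ Suc k / fact (Suc k)) has_real_derivative
      M * (real (Suc k) * (x - a) ^ k) / fact (Suc k)) (at x)"
    by (intro DERIV_cdivide DERIV_cmult)
  then show ?thesis
    by (simp add: fact_Suc del: of_nat_Suc)
qed

lemma pos_part_le: "a \<le> c \<Longrightarrow> 0 \<le> c \<Longrightarrow> pos_part a \<le> c"
  by (simp add: pos_part_def)

text \<open>Conditions on the end \<open>t\<^sub>1\<close> of the confinement phase and the margin \<open>R\<close> around the initial
  ball. The first keeps \<open>w \<le> \<theta>\<close> at distance \<open>L + R\<close> up to time \<open>t\<^sub>1\<close> (Chebyshev bound for the
  heat part plus the reaction growth \<open>\<epsilon> e\<^sup>t\<close>); the second keeps the heat part plus the reaction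
  accumulated during \<open>(0, t\<^sub>1)\<close> below \<open>\<theta>\<close> at time \<open>t\<close>, through the Gaussian mass escaping the
  slab or, for \<open>t > t\<^sub>1\<close>, through spreading.\<close>

definition confinement_condition :: "real \<Rightarrow> real \<Rightarrow> real \<Rightarrow> real \<Rightarrow> bool" where
  "confinement_condition \<theta> \<epsilon> t\<^sub>1 R \<longleftrightarrow> (\<theta> + \<epsilon>) * (2 * t\<^sub>1 / R\<^sup>2) + \<epsilon> * exp t\<^sub>1 \<le> \<theta>"

definition subthreshold_condition :: "real \<Rightarrow> real \<Rightarrow> real \<Rightarrow> real \<Rightarrow> real \<Rightarrow> real \<Rightarrow> bool" where
  "subthreshold_condition \<theta> \<epsilon> L t\<^sub>1 R t \<longleftrightarrow>
     (\<theta> + \<epsilon>) * (1 - normal_density 0 (sqrt (2 * t)) (L + 1)) + \<epsilon> * exp t\<^sub>1 \<le> \<theta> \<or>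
     t\<^sub>1 < t \<and> (\<theta> + \<epsilon>) * (2 * L / sqrt (4 * pi * t))
                + \<epsilon> * exp t\<^sub>1 * (2 * (L + R) / sqrt (4 * pi * (t - t\<^sub>1))) \<le> \<theta>"

context
  fixes \<theta> \<epsilon> L :: real and b :: "real^'n" and w :: "real \<Rightarrow> real^'n \<Rightarrow> real"
  assumes \<theta>: "\<theta> > 0" and \<epsilon>: "\<epsilon> > 0" and L: "L > 0" and b: "b \<in> Basis"
    and mild: "mild_solution (\<lambda>u. pos_part (u - \<theta>)) (\<lambda>x. (\<theta> + \<epsilon>) * indicator (ball 0 L) x) w"
begin

abbreviation heat_part :: "real \<Rightarrow> real^'n \<Rightarrow> real" where
  "heat_part t x \<equiv> \<integral>y. heat_kernel t (x - y) * ((\<theta> + \<epsilon>) * indicator (ball 0 L) y) \<partial>lborel"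

abbreviation reaction :: "real \<Rightarrow> real^'n \<Rightarrow> real \<Rightarrow> real" where
  "reaction t x s \<equiv> \<integral>y. heat_kernel (t - s) (x - y) * pos_part (w s y - \<theta>) \<partial>lborel"

lemma
  assumes "t > 0"
  shows integrable_heat_part:
      "integrable lborel (\<lambda>y. heat_kernel t (x - y) * ((\<theta> + \<epsilon>) * indicator (ball 0 L) y))"
    and integrable_reaction: "s \<in> {0<..<t} \<Longrightarrow>
      integrable lborel (\<lambda>y. heat_kernel (t - s) (x - y) * pos_part (w s y - \<theta>))"
    and set_integrable_reaction: "set_integrable lborel {0<..<t} (reaction t x)"
    and duhamel: "w t x = heat_part t x + (LINT s:{0<..<t}|lborel. reaction t x s)"
  using mild[unfolded mild_solution_def, THEN conjunct2, rule_format, OF assms, of x] by blast+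

lemma bounded_on_strip:
  assumes "T > 0"
  obtains M where "M \<ge> 0" and "\<And>t x. 0 < t \<Longrightarrow> t \<le> T \<Longrightarrow> \<bar>w t x\<bar> \<le> M"
proof -
  obtain M where M: "\<forall>t\<in>{0<..T}. \<forall>x. \<bar>w t x\<bar> \<le> M"
    using mild assms unfolding mild_solution_def by blast
  then have "0 \<le> M"
    using assms by (meson abs_ge_zero greaterThanAtMost_iff order.trans order_refl)
  with M show thesis
    using that by auto
qed

lemma heat_part_nonneg: "0 \<le> heat_part t x"
  using \<theta> \<epsilon> by (intro integral_nonneg_AE AE_I2 mult_nonneg_nonneg heat_kernel_nonneg) auto

lemma heat_part_le: "t > 0 \<Longrightarrow> heat_part t x \<le> \<theta> + \<epsilon>"
  by (rule heat_integral_le_const[OF _ integrable_heat_part]) (use \<theta> \<epsilon> in \<open>auto split: split_indicator\<close>)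

lemma heat_part_le_marginal:
  assumes t: "t > 0"
    and "(\<integral>u. normal_density (x \<bullet> b) (sqrt (2 * t)) u * indicator {-L<..<L} u \<partial>lborel) \<le> B"
  shows "heat_part t x \<le> (\<theta> + \<epsilon>) * B"
proof -
  have "heat_part t x
      \<le> (\<theta> + \<epsilon>) * (\<integral>u. normal_density (x \<bullet> b) (sqrt (2 * t)) u * indicator {-L<..<L} u \<partial>lborel)"
  proof (rule heat_integral_le_coordinate[OF t b _ _ _ _ integrable_heat_part[OF t]])
    show "(\<theta> + \<epsilon>) * indicator (ball 0 L) y \<le> (\<theta> + \<epsilon>) * indicator {-L<..<L} (y \<bullet> b)" for y
      using Basis_le_norm[OF b, of y] \<theta> \<epsilon> by (auto split: split_indicator)
  qed (use \<theta> \<epsilon> in \<open>auto split: split_indicator\<close>)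
  also have "\<dots> \<le> (\<theta> + \<epsilon>) * B"
    using assms(2) \<theta> \<epsilon> by (intro mult_left_mono) auto
  finally show ?thesis .
qed

lemma heat_part_le_escape:
  "t > 0 \<Longrightarrow> heat_part t x \<le> (\<theta> + \<epsilon>) * (1 - normal_density 0 (sqrt (2 * t)) (L + 1))"
  using L by (intro heat_part_le_marginal integral_normal_density_interval_le_one_minus) auto

lemma heat_part_le_width: "t > 0 \<Longrightarrow> heat_part t x \<le> (\<theta> + \<epsilon>) * (2 * L / sqrt (4 * pi * t))"
  using integral_normal_density_interval_le_width[of "sqrt (2 * t)" "-L" L "x \<bullet> b"] L
  by (intro heat_part_le_marginal) (auto simp: mult.assoc)

lemma heat_part_le_Chebyshev:
  "t > 0 \<Longrightarrow> R > 0 \<Longrightarrow> \<bar>x \<bullet> b\<bar> \<ge> L + R \<Longrightarrow> heat_part t x \<le> (\<theta> + \<epsilon>) * (2 * t / R\<^sup>2)"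
  using integral_normal_density_interval_le_Chebyshev[of "sqrt (2 * t)" R L "x \<bullet> b"]
  by (intro heat_part_le_marginal) auto

lemma reaction_le_const:
  assumes "0 < s" "s < t" "\<And>y. pos_part (w s y - \<theta>) \<le> c"
  shows "reaction t x s \<le> c"
  by (rule heat_integral_le_const[OF _ integrable_reaction]) (use assms in auto)

lemma reaction_le_slab:
  assumes "0 < s" "s < t" "c \<ge> 0" "K \<ge> 0"
    and source: "\<And>y. pos_part (w s y - \<theta>) \<le> c * indicator {-K<..<K} (y \<bullet> b)"
  shows "reaction t x s \<le> c * (2 * K / sqrt (4 * pi * (t - s)))"
proof -
  have "reaction t x s
      \<le> c * (\<integral>u. normal_density (x \<bullet> b) (sqrt (2 * (t - s))) u * indicator {-K<..<K} u \<partial>lborel)"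
    by (rule heat_integral_le_coordinate[OF _ b _ _ _ _ integrable_reaction source])
       (use assms in \<open>auto split: split_indicator\<close>)
  also have "\<dots> \<le> c * ((K - - K) / sqrt (2 * pi * (sqrt (2 * (t - s)))\<^sup>2))"
    using assms by (intro mult_left_mono integral_normal_density_interval_le_width) auto
  also have "\<dots> = c * (2 * K / sqrt (4 * pi * (t - s)))"
    using assms by simp
  finally show ?thesis .
qed

lemma w_nonneg: "t > 0 \<Longrightarrow> 0 \<le> w t x"
proof -
  assume t: "t > 0"
  have "0 \<le> (LINT s:{0<..<t}|lborel. reaction t x s)"
    unfolding set_lebesgue_integral_def
    by (intro integral_nonneg_AE AE_I2)
       (auto split: split_indicator simp: pos_part_def
         intro!: integral_nonneg_AE AE_I2 mult_nonneg_nonneg heat_kernel_nonneg)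
  then show ?thesis
    using duhamel[OF t, of x] heat_part_nonneg[of t x] by simp
qed

lemma w_le_heat_part_plus_exp_step:
  assumes s: "0 < s" and M: "M \<ge> 0"
    and below: "\<And>r y. 0 < r \<Longrightarrow> r < s \<Longrightarrow> w r y \<le> heat_part r y + \<epsilon> * (exp r - 1) + M * r ^ k / fact k"
  shows "w s y \<le> heat_part s y + \<epsilon> * (exp s - 1) + M * s ^ Suc k / fact (Suc k)"
proof -
  define B where "B r = \<epsilon> * exp r + M * r ^ k / fact k" for r
  define P where "P r = \<epsilon> * exp r + M * r ^ Suc k / fact (Suc k)" for r
  have "(LINT r:{0<..<s}|lborel. reaction s y r) \<le> P s - P 0"
  proof (rule set_integral_le_antiderivative[where B = B and P = P])
    show "reaction s y r \<le> B r" if r: "r \<in> {0<..<s}" for r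
    proof (rule reaction_le_const)
      fix y'
      have "w r y' \<le> heat_part r y' + \<epsilon> * (exp r - 1) + M * r ^ k / fact k"
        using below[of r y'] r by simp
      then have "w r y' \<le> \<theta> + \<epsilon> * exp r + M * r ^ k / fact k"
        using heat_part_le[of r y'] r by (simp add: right_diff_distrib)
      then show "pos_part (w r y' - \<theta>) \<le> B r"
        using \<epsilon> M r by (intro pos_part_le) (auto simp: B_def)
    qed (use r in auto)
    show "continuous_on {0..s} B"
      unfolding B_def by (intro continuous_intros) auto
    show "(P has_real_derivative B r) (at r)" for r
      unfolding P_def B_def
      by (intro DERIV_add DERIV_cmult DERIV_exp has_real_derivative_power_div_fact[where a = 0, unfolded diff_zero])
  qed (use s set_integrable_reaction in auto)
  then show ?thesis
    using duhamel[OF s, of y] by (simp add: P_def right_diff_distrib)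
qed

lemma w_le_heat_part_plus_exp:
  assumes t: "t > 0"
  shows "w t x \<le> heat_part t x + \<epsilon> * (exp t - 1)"
proof -
  obtain M where M: "M \<ge> 0" "\<And>s y. 0 < s \<Longrightarrow> s \<le> t \<Longrightarrow> \<bar>w s y\<bar> \<le> M"
    using bounded_on_strip[OF t] by blast
  have iterate: "w s y \<le> heat_part s y + \<epsilon> * (exp s - 1) + M * s ^ k / fact k"
    if "0 < s" "s \<le> t" for k s y
    using that
  proof (induction k arbitrary: s y)
    case 0
    have "0 \<le> \<epsilon> * (exp s - 1)"
      using \<epsilon> 0 by simp
    then show ?case
      using abs_le_D1[OF M(2)[of s y]] heat_part_nonneg[of s y] 0 by simp
  next
    case (Suc k)
    then show ?case
      using M(1) by (intro w_le_heat_part_plus_exp_step) auto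
  qed
  show ?thesis
    by (rule le_of_le_plus_power_div_fact[where M = M and t = t]) (rule iterate[OF t order_refl])
qed

lemma reaction_source_le_exp: "s > 0 \<Longrightarrow> pos_part (w s y - \<theta>) \<le> \<epsilon> * exp s"
  using w_le_heat_part_plus_exp[of s y] heat_part_le[of s y] \<epsilon>
  by (intro pos_part_le) (auto simp: algebra_simps)

lemma reaction_source_le_exp_slab:
  assumes s: "0 < s" "s \<le> t\<^sub>1" and R: "R > 0" and conf: "confinement_condition \<theta> \<epsilon> t\<^sub>1 R"
  shows "pos_part (w s y - \<theta>) \<le> \<epsilon> * exp s * indicator {-(L + R)<..<L + R} (y \<bullet> b)"
proof (cases "\<bar>y \<bullet> b\<bar> < L + R")
  case True
  then have "y \<bullet> b \<in> {-(L + R)<..<L + R}"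
    by auto
  then show ?thesis
    using reaction_source_le_exp[OF s(1), of y] by simp
next
  case False
  have "heat_part s y \<le> (\<theta> + \<epsilon>) * (2 * s / R\<^sup>2)"
    using False by (intro heat_part_le_Chebyshev s R) auto
  also have "\<dots> \<le> (\<theta> + \<epsilon>) * (2 * t\<^sub>1 / R\<^sup>2)"
    using s \<theta> \<epsilon> by (intro mult_left_mono divide_right_mono) auto
  finally have "w s y \<le> (\<theta> + \<epsilon>) * (2 * t\<^sub>1 / R\<^sup>2) + \<epsilon> * (exp s - 1)"
    using w_le_heat_part_plus_exp[OF s(1), of y] by simp
  moreover have "\<epsilon> * (exp s - 1) \<le> \<epsilon> * exp t\<^sub>1 - \<epsilon>"
    using s \<epsilon> by (simp add: algebra_simps)
  ultimately have "w s y \<le> \<theta>"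
    using conf \<epsilon> unfolding confinement_condition_def by linarith
  moreover have "y \<bullet> b \<notin> {-(L + R)<..<L + R}"
    using False by auto
  ultimately show ?thesis
    by (simp add: pos_part_def)
qed

lemma early_reaction_le_exp:
  assumes "0 < t\<^sub>1" "t\<^sub>1 \<le> t"
  shows "(LINT s:{0<..<t\<^sub>1}|lborel. reaction t x s) \<le> \<epsilon> * exp t\<^sub>1"
proof -
  have "(LINT s:{0<..<t\<^sub>1}|lborel. reaction t x s) \<le> \<epsilon> * exp t\<^sub>1 - \<epsilon> * exp 0"
  proof (rule set_integral_le_antiderivative[where B = "\<lambda>s. \<epsilon> * exp s" and P = "\<lambda>s. \<epsilon> * exp s"])
    show "set_integrable lborel {0<..<t\<^sub>1} (reaction t x)"
      using assms by (intro set_integrable_subset[OF set_integrable_reaction]) auto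
    show "reaction t x s \<le> \<epsilon> * exp s" if "s \<in> {0<..<t\<^sub>1}" for s
      using that assms reaction_source_le_exp by (intro reaction_le_const) auto
  qed (use assms in \<open>auto intro!: continuous_intros DERIV_cmult DERIV_exp\<close>)
  then show ?thesis
    using \<epsilon> by simp
qed

lemma early_reaction_le_slab:
  assumes t\<^sub>1: "0 < t\<^sub>1" "t\<^sub>1 < t" and R: "R > 0" and conf: "confinement_condition \<theta> \<epsilon> t\<^sub>1 R"
  shows "(LINT s:{0<..<t\<^sub>1}|lborel. reaction t x s) \<le> \<epsilon> * exp t\<^sub>1 * (2 * (L + R) / sqrt (4 * pi * (t - t\<^sub>1)))"
proof -
  define c where "c = 2 * (L + R) / sqrt (4 * pi * (t - t\<^sub>1))"
  have c: "c \<ge> 0"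
    unfolding c_def using L R t\<^sub>1 by auto
  have "(LINT s:{0<..<t\<^sub>1}|lborel. reaction t x s) \<le> c * \<epsilon> * exp t\<^sub>1 - c * \<epsilon> * exp 0"
  proof (rule set_integral_le_antiderivative[where B = "\<lambda>s. c * \<epsilon> * exp s" and P = "\<lambda>s. c * \<epsilon> * exp s"])
    show "set_integrable lborel {0<..<t\<^sub>1} (reaction t x)"
      using t\<^sub>1 by (intro set_integrable_subset[OF set_integrable_reaction]) auto
    show "reaction t x s \<le> c * \<epsilon> * exp s" if s: "s \<in> {0<..<t\<^sub>1}" for s
    proof -
      have "reaction t x s \<le> \<epsilon> * exp s * (2 * (L + R) / sqrt (4 * pi * (t - s)))"
        using s t\<^sub>1 \<epsilon> L R by (intro reaction_le_slab reaction_source_le_exp_slab[OF _ _ R conf]) auto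
      also have "\<dots> \<le> \<epsilon> * exp s * c"
        unfolding c_def using s t\<^sub>1 \<epsilon> L R by (intro mult_left_mono divide_left_mono) auto
      finally show ?thesis
        by (simp add: ac_simps)
    qed
  qed (use t\<^sub>1 in \<open>auto intro!: continuous_intros DERIV_cmult DERIV_exp\<close>)
  moreover have "c * \<epsilon> * exp t\<^sub>1 - c * \<epsilon> * exp 0 \<le> \<epsilon> * exp t\<^sub>1 * c"
    using c \<epsilon> by simp
  ultimately show ?thesis
    unfolding c_def by linarith
qed

lemma w_le_early_reaction:
  assumes t\<^sub>1: "0 < t\<^sub>1" "t\<^sub>1 \<le> t" and M: "M \<ge> 0"
    and below: "\<And>s y. t\<^sub>1 \<le> s \<Longrightarrow> s < t \<Longrightarrow> w s y \<le> \<theta> + M * (s - t\<^sub>1) ^ k / fact k"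
  shows "w t x \<le> heat_part t x + (LINT s:{0<..<t\<^sub>1}|lborel. reaction t x s) + M * (t - t\<^sub>1) ^ Suc k / fact (Suc k)"
proof -
  have t: "t > 0"
    using t\<^sub>1 by simp
  have early: "set_integrable lborel {0<..<t\<^sub>1} (reaction t x)"
    and late: "set_integrable lborel {t\<^sub>1..<t} (reaction t x)"
    using t\<^sub>1 by (auto intro: set_integrable_subset[OF set_integrable_reaction[OF t]])
  have "{0<..<t} = {0<..<t\<^sub>1} \<union> {t\<^sub>1..<t}" and disjoint: "{0<..<t\<^sub>1} \<inter> {t\<^sub>1..<t} = {}"
    using t\<^sub>1 by auto
  then have "(LINT s:{0<..<t}|lborel. reaction t x s)
      = (LINT s:{0<..<t\<^sub>1}|lborel. reaction t x s) + (LINT s:{t\<^sub>1..<t}|lborel. reaction t x s)"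
    using set_integral_Un[OF disjoint early late] by simp
  moreover have "(LINT s:{t\<^sub>1..<t}|lborel. reaction t x s)
      \<le> M * (t - t\<^sub>1) ^ Suc k / fact (Suc k) - M * (t\<^sub>1 - t\<^sub>1) ^ Suc k / fact (Suc k)"
  proof (rule set_integral_le_antiderivative[OF t\<^sub>1(2) _ _ _ late,
        where P = "\<lambda>s. M * (s - t\<^sub>1) ^ Suc k / fact (Suc k)"])
    show "reaction t x s \<le> M * (s - t\<^sub>1) ^ k / fact k" if s: "s \<in> {t\<^sub>1..<t}" for s
    proof (rule reaction_le_const)
      show "pos_part (w s y - \<theta>) \<le> M * (s - t\<^sub>1) ^ k / fact k" for y
        using below[of s y] s M by (intro pos_part_le) auto
    qed (use s t\<^sub>1 in auto)
    show "((\<lambda>s. M * (s - t\<^sub>1) ^ Suc k / fact (Suc k)) has_real_derivative M * (s - t\<^sub>1) ^ k / fact k) (at s)"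
      for s
      by (rule has_real_derivative_power_div_fact)
  qed (auto intro!: continuous_intros)
  ultimately show ?thesis
    using duhamel[OF t, of x] by simp
qed

lemma heat_part_plus_early_reaction_le_threshold:
  assumes t\<^sub>1: "0 < t\<^sub>1" "t\<^sub>1 \<le> t" and R: "R > 0" and conf: "confinement_condition \<theta> \<epsilon> t\<^sub>1 R"
    and sub: "subthreshold_condition \<theta> \<epsilon> L t\<^sub>1 R t"
  shows "heat_part t x + (LINT s:{0<..<t\<^sub>1}|lborel. reaction t x s) \<le> \<theta>"
  using sub unfolding subthreshold_condition_def
proof (elim disjE conjE)
  assume "(\<theta> + \<epsilon>) * (1 - normal_density 0 (sqrt (2 * t)) (L + 1)) + \<epsilon> * exp t\<^sub>1 \<le> \<theta>"
  then show ?thesis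
    using heat_part_le_escape[of t x] early_reaction_le_exp[OF t\<^sub>1, of x] t\<^sub>1 by simp
next
  assume "t\<^sub>1 < t" and "(\<theta> + \<epsilon>) * (2 * L / sqrt (4 * pi * t))
      + \<epsilon> * exp t\<^sub>1 * (2 * (L + R) / sqrt (4 * pi * (t - t\<^sub>1))) \<le> \<theta>"
  then show ?thesis
    using heat_part_le_width[of t x] early_reaction_le_slab[OF t\<^sub>1(1) _ R conf, of t x] t\<^sub>1 by simp
qed

lemma w_le_threshold_after:
  assumes t\<^sub>1: "0 < t\<^sub>1" and R: "R > 0" and conf: "confinement_condition \<theta> \<epsilon> t\<^sub>1 R"
    and sub: "\<And>t. t\<^sub>1 \<le> t \<Longrightarrow> subthreshold_condition \<theta> \<epsilon> L t\<^sub>1 R t" and t: "t\<^sub>1 \<le> t"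
  shows "w t x \<le> \<theta>"
proof -
  obtain M where M: "M \<ge> 0" "\<And>s y. 0 < s \<Longrightarrow> s \<le> t \<Longrightarrow> \<bar>w s y\<bar> \<le> M"
    using bounded_on_strip[of t] t\<^sub>1 t by auto
  have iterate: "w s y \<le> \<theta> + M * (s - t\<^sub>1) ^ k / fact k" if "t\<^sub>1 \<le> s" "s \<le> t" for k s y
    using that
  proof (induction k arbitrary: s y)
    case 0
    then show ?case
      using M(2)[of s y] t\<^sub>1 \<theta> by simp
  next
    case (Suc k)
    have "w s y \<le> heat_part s y + (LINT r:{0<..<t\<^sub>1}|lborel. reaction s y r) + M * (s - t\<^sub>1) ^ Suc k / fact (Suc k)"
      using Suc t\<^sub>1 M(1) by (intro w_le_early_reaction) auto
    then show ?case
      using heat_part_plus_early_reaction_le_threshold[OF t\<^sub>1 Suc.prems(1) R conf sub, of y] Suc.prems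
      by simp
  qed
  show ?thesis
    by (rule le_of_le_plus_power_div_fact[where M = M and t = "t - t\<^sub>1"]) (rule iterate[OF t order_refl])
qed

lemma w_uniformly_tendsto_zero:
  assumes t\<^sub>1: "0 < t\<^sub>1" and R: "R > 0" and conf: "confinement_condition \<theta> \<epsilon> t\<^sub>1 R"
    and sub: "\<And>t. t\<^sub>1 \<le> t \<Longrightarrow> subthreshold_condition \<theta> \<epsilon> L t\<^sub>1 R t"
  shows "\<forall>e>0. \<exists>T. \<forall>t\<ge>T. \<forall>x. \<bar>w t x\<bar> < e"
proof (intro allI impI)
  fix e :: real
  assume "e > 0"
  define bound where
    "bound t = (\<theta> + \<epsilon>) * (2 * L / sqrt (4 * pi * t)) + \<epsilon> * exp t\<^sub>1 * (2 * (L + R) / sqrt (4 * pi * (t - t\<^sub>1)))"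
    for t
  have w_le: "w t x \<le> bound t" if "t\<^sub>1 < t" for t x
  proof -
    have "w t x \<le> heat_part t x + (LINT s:{0<..<t\<^sub>1}|lborel. reaction t x s)"
      using w_le_early_reaction[where M = 0 and k = 0] w_le_threshold_after[OF t\<^sub>1 R conf sub] that t\<^sub>1
      by simp
    then show ?thesis
      unfolding bound_def using heat_part_le_width[of t x] early_reaction_le_slab[OF t\<^sub>1 that R conf, of x] t\<^sub>1 that
      by simp
  qed
  have "(bound \<longlongrightarrow> 0) at_top"
    unfolding bound_def by real_asymp
  then have "\<forall>\<^sub>F t in at_top. bound t < e \<and> t\<^sub>1 < t"
    using \<open>e > 0\<close> by (auto intro: eventually_conj order_tendstoD(2) eventually_gt_at_top)
  then obtain T where "\<And>t. t \<ge> T \<Longrightarrow> bound t < e \<and> t\<^sub>1 < t"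
    unfolding eventually_at_top_linorder by blast
  then have "\<bar>w t x\<bar> < e" if "t \<ge> T" for t x
    using w_le[of t x] w_nonneg[of t x] t\<^sub>1 that by force
  then show "\<exists>T. \<forall>t\<ge>T. \<forall>x. \<bar>w t x\<bar> < e"
    by blast
qed

end

section \<open>Choice of the parameters\<close>

lemma real_sqrt_power4: "sqrt (x ^ 4) = x\<^sup>2"
  by (rule real_sqrt_unique) (simp_all add: power_mult[symmetric])

lemma normal_density_ge_moderate_time:
  fixes \<gamma> l L t :: real
  assumes \<gamma>: "0 < \<gamma>" and l: "1 \<le> 2 * \<gamma> * l" and L: "0 < L" "L < \<gamma> * l"
    and t: "\<gamma> * l / 2 \<le> t" "t \<le> l ^ 4"
  shows "exp (- (\<gamma> * l / 2 + 2)) / (sqrt (4 * pi) * l\<^sup>2) \<le> normal_density 0 (sqrt (2 * t)) (L + 1)"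
proof -
  have "0 < 2 * \<gamma> * l"
    using l by linarith
  then have "l > 0" and "0 < \<gamma> * l"
    using \<gamma> by (simp_all add: zero_less_mult_iff)
  then have "t > 0"
    using t by linarith
  have "(L + 1)\<^sup>2 / (4 * t) \<le> (\<gamma> * l + 1)\<^sup>2 / (4 * (\<gamma> * l / 2))"
    using L t \<open>t > 0\<close> \<open>0 < \<gamma> * l\<close> by (intro frac_le power_mono) auto
  also have "\<dots> = \<gamma> * l / 2 + 1 + 1 / (2 * \<gamma> * l)"
    using \<gamma> \<open>l > 0\<close> by (simp add: field_simps power2_eq_square)
  also have "\<dots> \<le> \<gamma> * l / 2 + 2"
    using l by simp
  finally have exponent: "(L + 1)\<^sup>2 / (4 * t) \<le> \<gamma> * l / 2 + 2" .
  have "sqrt (4 * pi * t) \<le> sqrt (4 * pi) * sqrt (l ^ 4)"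
    using t by (simp add: real_sqrt_mult[symmetric])
  then have "exp (- (\<gamma> * l / 2 + 2)) / (sqrt (4 * pi) * l\<^sup>2) \<le> exp (- (L + 1)\<^sup>2 / (4 * t)) / sqrt (4 * pi * t)"
    using exponent \<open>t > 0\<close> by (intro frac_le) (auto simp: real_sqrt_power4)
  also have "\<dots> = normal_density 0 (sqrt (2 * t)) (L + 1)"
    unfolding normal_density_def using \<open>t > 0\<close> by (simp add: mult.assoc)
  finally show ?thesis .
qed

lemma subthreshold_moderate_time:
  fixes \<theta> \<gamma> l L t :: real
  assumes \<theta>: "0 < \<theta>" and \<gamma>: "0 < \<gamma>" and l: "1 \<le> 2 * \<gamma> * l" and L: "0 < L" "L < \<gamma> * l"
    and t: "\<gamma> * l / 2 \<le> t" "t \<le> l ^ 4"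
    and small: "2 * sqrt (4 * pi) * exp 2 * l\<^sup>2 * exp (- (1 - \<gamma>) * l) \<le> \<theta>"
  shows "(\<theta> + exp (- l)) * (1 - normal_density 0 (sqrt (2 * t)) (L + 1)) + exp (- l) * exp (\<gamma> * l / 2) \<le> \<theta>"
proof -
  have "0 < 2 * \<gamma> * l"
    using l by linarith
  then have "l > 0" and "0 < \<gamma> * l"
    using \<gamma> by (simp_all add: zero_less_mult_iff)
  define \<eta> where "\<eta> = normal_density 0 (sqrt (2 * t)) (L + 1)"
  have \<eta>: "exp (- (\<gamma> * l / 2 + 2)) / (sqrt (4 * pi) * l\<^sup>2) \<le> \<eta>"
    unfolding \<eta>_def by (rule normal_density_ge_moderate_time[OF \<gamma> l L t])
  define E where "E = exp (- (1 - \<gamma> / 2) * l)"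
  have "exp (- l) \<le> E" and "exp (- l) * exp (\<gamma> * l / 2) = E"
    and E_split: "E = exp 2 * exp (- (1 - \<gamma>) * l) * exp (- (\<gamma> * l / 2 + 2))"
    unfolding E_def using \<open>0 < \<gamma> * l\<close> by (simp_all add: mult_exp_exp algebra_simps)
  then have "(exp (- l) + exp (- l) * exp (\<gamma> * l / 2)) * (sqrt (4 * pi) * l\<^sup>2) \<le> (2 * E) * (sqrt (4 * pi) * l\<^sup>2)"
    by (intro mult_right_mono) auto
  also have "\<dots> = (2 * sqrt (4 * pi) * exp 2 * l\<^sup>2 * exp (- (1 - \<gamma>) * l)) * exp (- (\<gamma> * l / 2 + 2))"
    unfolding E_split by (simp add: ac_simps)
  also have "\<dots> \<le> \<theta> * exp (- (\<gamma> * l / 2 + 2))"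
    using small by (intro mult_right_mono) auto
  finally have "exp (- l) + exp (- l) * exp (\<gamma> * l / 2) \<le> \<theta> * (exp (- (\<gamma> * l / 2 + 2)) / (sqrt (4 * pi) * l\<^sup>2))"
    using \<open>l > 0\<close> by (simp add: field_simps)
  also have "\<dots> \<le> (\<theta> + exp (- l)) * \<eta>"
    using \<eta> \<theta> by (intro mult_mono) (auto simp: add_nonneg_nonneg)
  finally show ?thesis
    unfolding \<eta>_def by (simp add: algebra_simps)
qed

lemma subthreshold_large_time:
  fixes \<theta> \<gamma> l L t :: real
  assumes \<theta>: "0 < \<theta>" and \<gamma>: "0 < \<gamma>" "\<gamma> < 1" and l: "1 \<le> l" and L: "0 < L" "L < \<gamma> * l"
    and t: "l ^ 4 < t"
    and small: "(\<theta> + 1) * 2 / l + 4 * exp (- (1 - \<gamma> / 2) * l) / l \<le> \<theta>"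
  shows "\<gamma> * l / 2 < t \<and> (\<theta> + exp (- l)) * (2 * L / sqrt (4 * pi * t))
      + exp (- l) * exp (\<gamma> * l / 2) * (2 * (L + l) / sqrt (4 * pi * (t - \<gamma> * l / 2))) \<le> \<theta>"
proof -
  have "l \<le> l ^ 4"
    using power_increasing[of 1 4 l] l by simp
  moreover have "\<gamma> * l \<le> l"
    using \<gamma> l by simp
  moreover have "2 * (t - \<gamma> * l / 2) = 2 * t - \<gamma> * l"
    by simp
  ultimately have L_le: "L \<le> l" and t_pos: "\<gamma> * l / 2 < t"
    and t_large: "l ^ 4 \<le> 2 * (t - \<gamma> * l / 2)"
    using t L by linarith+
  have sqrt_ge: "l\<^sup>2 \<le> sqrt (4 * pi * s)" if "l ^ 4 \<le> 2 * s" for s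
  proof -
    have "0 \<le> s"
      using that l by (smt (verit) zero_le_power)
    then have "2 * s \<le> 4 * pi * s"
      using pi_gt3 by (intro mult_right_mono) auto
    then have "sqrt (l ^ 4) \<le> sqrt (4 * pi * s)"
      using that by simp
    then show ?thesis
      by (simp add: real_sqrt_power4)
  qed
  have "l\<^sup>2 > 0"
    using l by simp
  have "2 * L / sqrt (4 * pi * t) \<le> 2 * l / l\<^sup>2"
    using sqrt_ge[of t] t_large t_pos L_le L \<open>l\<^sup>2 > 0\<close> by (intro frac_le) auto
  then have "(\<theta> + exp (- l)) * (2 * L / sqrt (4 * pi * t)) \<le> (\<theta> + 1) * (2 / l)"
    using \<theta> L l t_pos by (intro mult_mono) (auto simp: power2_eq_square)
  moreover have "exp (- l) * exp (\<gamma> * l / 2) * (2 * (L + l) / sqrt (4 * pi * (t - \<gamma> * l / 2)))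
      \<le> exp (- (1 - \<gamma> / 2) * l) * (4 / l)"
  proof -
    have "2 * (L + l) / sqrt (4 * pi * (t - \<gamma> * l / 2)) \<le> 4 * l / l\<^sup>2"
      using sqrt_ge[of "t - \<gamma> * l / 2"] t_large L_le L \<open>l\<^sup>2 > 0\<close> by (intro frac_le) auto
    also have "\<dots> = 4 / l"
      by (simp add: power2_eq_square)
    finally have "2 * (L + l) / sqrt (4 * pi * (t - \<gamma> * l / 2)) \<le> 4 / l" .
    moreover have "exp (- l) * exp (\<gamma> * l / 2) = exp (- (1 - \<gamma> / 2) * l)"
      by (simp add: mult_exp_exp algebra_simps)
    ultimately show ?thesis
      by (metis exp_ge_zero mult_left_mono)
  qed
  moreover have "(\<theta> + 1) * (2 / l) + exp (- (1 - \<gamma> / 2) * l) * (4 / l) \<le> \<theta>"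
    using small by (simp add: ac_simps)
  ultimately have "(\<theta> + exp (- l)) * (2 * L / sqrt (4 * pi * t))
      + exp (- l) * exp (\<gamma> * l / 2) * (2 * (L + l) / sqrt (4 * pi * (t - \<gamma> * l / 2))) \<le> \<theta>"
    by linarith
  with t_pos show ?thesis
    by blast
qed

lemma threshold_conditions_eventually:
  fixes \<theta> \<gamma> :: real
  assumes \<theta>: "\<theta> > 0" and \<gamma>: "0 < \<gamma>" "\<gamma> < 1"
  shows "\<forall>\<^sub>F l in at_top. confinement_condition \<theta> (exp (- l)) (\<gamma> * l / 2) l \<and>
    (\<forall>L t. 0 < L \<and> L < \<gamma> * l \<and> \<gamma> * l / 2 \<le> t \<longrightarrow> subthreshold_condition \<theta> (exp (- l)) L (\<gamma> * l / 2) l t)"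
proof -
  have rates: "1 - \<gamma> / 2 > 0" "1 - \<gamma> > 0"
    using \<gamma> by auto
  have "((\<lambda>l. (\<theta> + exp (- l)) * (2 * (\<gamma> * l / 2) / l\<^sup>2) + exp (- l) * exp (\<gamma> * l / 2)) \<longlongrightarrow> 0) at_top"
    using rates by real_asymp
  moreover have "((\<lambda>l. 2 * sqrt (4 * pi) * exp 2 * l\<^sup>2 * exp (- (1 - \<gamma>) * l)) \<longlongrightarrow> 0) at_top"
    using rates by real_asymp
  moreover have "((\<lambda>l. (\<theta> + 1) * 2 / l + 4 * exp (- (1 - \<gamma> / 2) * l) / l) \<longlongrightarrow> 0) at_top"
    using rates by real_asymp
  ultimately have "\<forall>\<^sub>F l in at_top. (\<theta> + exp (- l)) * (2 * (\<gamma> * l / 2) / l\<^sup>2) + exp (- l) * exp (\<gamma> * l / 2) < \<theta> \<and>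
      2 * sqrt (4 * pi) * exp 2 * l\<^sup>2 * exp (- (1 - \<gamma>) * l) < \<theta> \<and>
      (\<theta> + 1) * 2 / l + 4 * exp (- (1 - \<gamma> / 2) * l) / l < \<theta> \<and> l \<ge> max 1 (1 / (2 * \<gamma>))"
    using \<theta> by (intro eventually_conj order_tendstoD(2) eventually_ge_at_top) auto
  then show ?thesis
  proof eventually_elim
    case (elim l)
    then have l: "1 \<le> l" "1 \<le> 2 * \<gamma> * l"
      using \<gamma> by (auto simp: field_simps)
    have "subthreshold_condition \<theta> (exp (- l)) L (\<gamma> * l / 2) l t"
      if "0 < L" "L < \<gamma> * l" "\<gamma> * l / 2 \<le> t" for L t
    proof (cases "t \<le> l ^ 4")
      case True
      then show ?thesis
        unfolding subthreshold_condition_def using that elim l \<gamma>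
        by (intro disjI1 subthreshold_moderate_time[OF \<theta>]) auto
    next
      case False
      then show ?thesis
        unfolding subthreshold_condition_def using that elim l \<gamma>
        by (intro disjI2 subthreshold_large_time[OF \<theta>]) auto
    qed
    then show ?case
      using elim unfolding confinement_condition_def by auto
  qed
qed

lemma threshold_parameters:
  fixes \<theta> \<delta> \<gamma> :: real
  assumes \<theta>: "\<theta> > 0" and \<delta>: "\<delta> > \<theta>" and \<gamma>: "0 < \<gamma>" "\<gamma> < 1"
  obtains \<epsilon>\<^sub>0 where "\<epsilon>\<^sub>0 > 0" and "\<And>\<epsilon> L. 0 < \<epsilon> \<Longrightarrow> \<epsilon> < \<epsilon>\<^sub>0 \<Longrightarrow> 0 < L \<Longrightarrow> L < \<gamma> * ln (1 / \<epsilon>) \<Longrightarrow>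
    \<exists>t\<^sub>1 R. 0 < t\<^sub>1 \<and> 0 < R \<and> t\<^sub>1 \<le> ln ((\<delta> - \<theta>) / \<epsilon>) \<and> confinement_condition \<theta> \<epsilon> t\<^sub>1 R \<and>
      (\<forall>t\<ge>t\<^sub>1. subthreshold_condition \<theta> \<epsilon> L t\<^sub>1 R t)"
proof -
  have "\<forall>\<^sub>F l in at_top. (confinement_condition \<theta> (exp (- l)) (\<gamma> * l / 2) l \<and>
      (\<forall>L t. 0 < L \<and> L < \<gamma> * l \<and> \<gamma> * l / 2 \<le> t \<longrightarrow> subthreshold_condition \<theta> (exp (- l)) L (\<gamma> * l / 2) l t))
      \<and> 0 < l \<and> \<gamma> * l / 2 \<le> l + ln (\<delta> - \<theta>)"
    by (rule eventually_conj[OF threshold_conditions_eventually[OF \<theta> \<gamma>] eventually_conj[OF eventually_gt_at_top]])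
       (use \<gamma> in real_asymp)
  then obtain l\<^sub>0 where l\<^sub>0: "\<And>l. l \<ge> l\<^sub>0 \<Longrightarrow> (confinement_condition \<theta> (exp (- l)) (\<gamma> * l / 2) l \<and>
      (\<forall>L t. 0 < L \<and> L < \<gamma> * l \<and> \<gamma> * l / 2 \<le> t \<longrightarrow> subthreshold_condition \<theta> (exp (- l)) L (\<gamma> * l / 2) l t))
      \<and> 0 < l \<and> \<gamma> * l / 2 \<le> l + ln (\<delta> - \<theta>)"
    unfolding eventually_at_top_linorder by blast
  show thesis
  proof (rule that[of "exp (- l\<^sub>0)"])
    fix \<epsilon> L :: real
    assume \<epsilon>: "0 < \<epsilon>" "\<epsilon> < exp (- l\<^sub>0)" and L: "0 < L" "L < \<gamma> * ln (1 / \<epsilon>)"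
    define l where "l = ln (1 / \<epsilon>)"
    have \<epsilon>_eq: "exp (- l) = \<epsilon>"
      using \<epsilon> by (simp add: l_def ln_div)
    have "l\<^sub>0 < l"
      using \<epsilon> ln_less_cancel_iff[of \<epsilon> "exp (- l\<^sub>0)"] by (simp add: l_def ln_div)
    moreover have "ln ((\<delta> - \<theta>) / \<epsilon>) = l + ln (\<delta> - \<theta>)"
      using \<epsilon> \<delta> by (simp add: l_def ln_div)
    ultimately show "\<exists>t\<^sub>1 R. 0 < t\<^sub>1 \<and> 0 < R \<and> t\<^sub>1 \<le> ln ((\<delta> - \<theta>) / \<epsilon>) \<and>
        confinement_condition \<theta> \<epsilon> t\<^sub>1 R \<and> (\<forall>t\<ge>t\<^sub>1. subthreshold_condition \<theta> \<epsilon> L t\<^sub>1 R t)"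
      using l\<^sub>0[of l] L \<gamma> unfolding \<epsilon>_eq by (intro exI[of _ "\<gamma> * l / 2"] exI[of _ l]) (auto simp flip: l_def)
  qed simp
qed

theorem proposition2p1:
  fixes \<theta> \<delta> \<gamma> :: real
  assumes "\<theta> > 0" and "\<delta> > \<theta>" and "0 < \<gamma>" and "\<gamma> < 1"
  shows "\<exists>\<epsilon>0>0. \<forall>\<epsilon>. 0 < \<epsilon> \<and> \<epsilon> < \<epsilon>0 \<longrightarrow>
           (\<forall>L. 0 < L \<and> L < \<gamma> * ln (1 / \<epsilon>) \<longrightarrow>
             (\<forall>w :: real \<Rightarrow> real^'n \<Rightarrow> real.
                mild_solution (\<lambda>u. pos_part (u - \<theta>))
                  (\<lambda>x. (\<theta> + \<epsilon>) * indicator (ball 0 L) x) w \<longrightarrow>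
                (\<forall>x. w (ln ((\<delta> - \<theta>) / \<epsilon>)) x \<le> \<theta>) \<and>
                (\<forall>e>0. \<exists>T. \<forall>t\<ge>T. \<forall>x. \<bar>w t x\<bar> < e)))"
proof -
  obtain \<epsilon>\<^sub>0 where "\<epsilon>\<^sub>0 > 0" and parameters: "\<And>\<epsilon> L. 0 < \<epsilon> \<Longrightarrow> \<epsilon> < \<epsilon>\<^sub>0 \<Longrightarrow> 0 < L \<Longrightarrow> L < \<gamma> * ln (1 / \<epsilon>) \<Longrightarrow>
      \<exists>t\<^sub>1 R. 0 < t\<^sub>1 \<and> 0 < R \<and> t\<^sub>1 \<le> ln ((\<delta> - \<theta>) / \<epsilon>) \<and> confinement_condition \<theta> \<epsilon> t\<^sub>1 R \<and>
        (\<forall>t\<ge>t\<^sub>1. subthreshold_condition \<theta> \<epsilon> L t\<^sub>1 R t)"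
    using threshold_parameters[OF assms] by blast
  show ?thesis
  proof (rule exI[of _ \<epsilon>\<^sub>0], intro conjI allI impI)
    fix \<epsilon> L :: real and w :: "real \<Rightarrow> real^'n \<Rightarrow> real"
    assume \<epsilon>: "0 < \<epsilon> \<and> \<epsilon> < \<epsilon>\<^sub>0" and L: "0 < L \<and> L < \<gamma> * ln (1 / \<epsilon>)"
      and mild: "mild_solution (\<lambda>u. pos_part (u - \<theta>)) (\<lambda>x. (\<theta> + \<epsilon>) * indicator (ball 0 L) x) w"
    obtain t\<^sub>1 R where t\<^sub>1: "0 < t\<^sub>1" "t\<^sub>1 \<le> ln ((\<delta> - \<theta>) / \<epsilon>)" and R: "0 < R"
      and conf: "confinement_condition \<theta> \<epsilon> t\<^sub>1 R" and sub: "\<forall>t\<ge>t\<^sub>1. subthreshold_condition \<theta> \<epsilon> L t\<^sub>1 R t"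
      using parameters \<epsilon> L by blast
    show "w (ln ((\<delta> - \<theta>) / \<epsilon>)) x \<le> \<theta>" for x
      using w_le_threshold_after[OF assms(1) _ _ SOME_Basis mild t\<^sub>1(1) R conf] \<epsilon> L sub t\<^sub>1(2) by blast
    show "\<exists>T. \<forall>t\<ge>T. \<forall>x. \<bar>w t x\<bar> < e" if "e > 0" for e
      using w_uniformly_tendsto_zero[OF assms(1) _ _ SOME_Basis mild t\<^sub>1(1) R conf] \<epsilon> L sub that by blast
  qed fact
qed

end
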